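(* Let $\sigma=(M_1,M_2)$ be a schedule with machine 1 critical, and $k\ge1$. Suppose there exist sets $S'\subseteq M_1$ and $S''\subseteq M_2$ with $|S'|+|S''|=k$ and $0<\sum_{j\in S'}p_j-\sum_{j\in S''}p_j<\Delta$. If the randomized $k$-swap algorithm is repeated (with independent randomness) $\gamma=\dfrac{2^k}{\binom{k}{\lceil k/2\rceil}}$ times, the probability that it fails to find an improving schedule is at most $\frac1e$.
   Context: Problem $P2\|C_{\max}$: $n$ jobs with processing times $p_j>0$, two identical machines. A schedule $\sigma=(M_1,M_2)$ partitions the jobs into sets processed on machines 1 and 2; loads $L_i=\sum_{j\in M_i}p_j$, makespan $L_{\max}=\max_iL_i$, $L_{\min}=\min_iL_i$, $\Delta=L_{\max}-L_{\min}$; a machine with load $L_{\max}$ is critical. An improving schedule is one with strictly smaller makespan. Randomized $k$-swap algorithm (input $\sigma$, $k$; machine 1 critical): (1) assign each job independently and uniformly at random to $A$ or $B$; (2) for every $S_1\subseteq A$ with $|S_1|=\lceil k/2\rceil$ put $\sum_{j\in S_1\cap M_1}p_j-\sum_{j\in S_1\cap M_2}p_j$ (with reference to $S_1$) into $A_\Sigma$; (3) for every $S_2\subseteq B$ with $|S_2|=\lfloor k/2\rfloor$ put $\sum_{j\in S_2\cap M_1}p_j-\sum_{j\in S_2\cap M_2}p_j$ into $B_\Sigma$; (4) sort $B_\Sigma$ non-decreasingly; (5) for each $x\in A_\Sigma$ binary-search for $y\in B_\Sigma$ with $-x<y<\Delta-x$; if found, interchange the machine assignments of all jobs of the corresponding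 $S_1\cup S_2$ and return True (the algorithm succeeds); (6) otherwise return False (the algorithm fails). *)

theory Defs
  imports "HOL-Probability.Probability"
begin

definition load :: "('j \<Rightarrow> real) \<Rightarrow> 'j set \<Rightarrow> real" where
  "load p M = (\<Sum>j\<in>M. p j)"

definition is_schedule :: "'j set \<Rightarrow> 'j set \<Rightarrow> 'j set \<Rightarrow> bool" where
  "is_schedule J M1 M2 \<longleftrightarrow> M1 \<union> M2 = J \<and> M1 \<inter> M2 = {}"

definition swap_val :: "('j \<Rightarrow> real) \<Rightarrow> 'j set \<Rightarrow> 'j set \<Rightarrow> 'j set \<Rightarrow> real" where
  "swap_val p M1 M2 S = (\<Sum>j\<in>S \<inter> M1. p j) - (\<Sum>j\<in>S \<inter> M2. p j)"

(* One run of the randomized k-swap algorithm (machine 1 critical), given the random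
   assignment omega of jobs to A (omega j = True) or B (omega j = False). *)
definition kswap_succeeds ::
  "'j set \<Rightarrow> ('j \<Rightarrow> real) \<Rightarrow> 'j set \<Rightarrow> 'j set \<Rightarrow> nat \<Rightarrow> ('j \<Rightarrow> bool) \<Rightarrow> bool" where
  "kswap_succeeds J p M1 M2 k \<omega> \<longleftrightarrow>
     (\<exists>S1 S2. S1 \<subseteq> {j\<in>J. \<omega> j} \<and> card S1 = nat \<lceil>real k / 2\<rceil> \<and>
              S2 \<subseteq> {j\<in>J. \<not> \<omega> j} \<and> card S2 = nat \<lfloor>real k / 2\<rfloor> \<and>
              - swap_val p M1 M2 S1 < swap_val p M1 M2 S2 \<and>
              swap_val p M1 M2 S2 < (load p M1 - load p M2) - swap_val p M1 M2 S1)"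

definition assign_pmf :: "'j set \<Rightarrow> ('j \<Rightarrow> bool) pmf" where
  "assign_pmf J = Pi_pmf J False (\<lambda>_. bernoulli_pmf (1/2))"

definition runs_pmf :: "'j set \<Rightarrow> nat \<Rightarrow> (nat \<Rightarrow> 'j \<Rightarrow> bool) pmf" where
  "runs_pmf J m = Pi_pmf {..<m} (\<lambda>_. False) (\<lambda>_. assign_pmf J)"

definition fail_prob :: "'j set \<Rightarrow> ('j \<Rightarrow> real) \<Rightarrow> 'j set \<Rightarrow> 'j set \<Rightarrow> nat \<Rightarrow> nat \<Rightarrow> real" where
  "fail_prob J p M1 M2 k m =
     measure_pmf.prob (runs_pmf J m) {\<Omega>. \<forall>i<m. \<not> kswap_succeeds J p M1 M2 k (\<Omega> i)}"

definition gamma :: "nat \<Rightarrow> real" where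
  "gamma k = 2 ^ k / real (k choose nat \<lceil>real k / 2\<rceil>)"

end

theory Submission
  imports Defs
begin

(* Let S = S' \<union> S''. If the random split puts exactly \<lceil>k/2\<rceil> jobs of S into A, then
   S \<inter> A and S \<inter> B are among the pairs examined by one run, and their swap values add
   up to that of S, which lies in (0, \<Delta>); so the run succeeds. The number of jobs of S
   put into A is binomially distributed with parameters k and 1/2, hence a run fails with
   probability at most 1 - q, where q = (k choose \<lceil>k/2\<rceil>) / 2^k = 1 / gamma k, and
   \<lceil>gamma k\<rceil> independent runs all fail with probability at most (1 - q)^\<lceil>1/q\<rceil> \<le> 1/e. *)

lemma nat_ceiling_half_plus_nat_floor_half:
  "nat \<lceil>real k / 2\<rceil> + nat \<lfloor>real k / 2\<rfloor> = k"
proof (cases "even k")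
  case True
  then show ?thesis by (auto elim: evenE)
next
  case False
  then obtain a where k: "k = 2 * a + 1" by (auto elim: oddE)
  have "\<lceil>real k / 2\<rceil> = int a + 1" unfolding k by (intro ceiling_unique) auto
  moreover have "\<lfloor>real k / 2\<rfloor> = int a" unfolding k by (intro floor_unique) auto
  ultimately show ?thesis using k by simp
qed

lemma nat_ceiling_half_le: "nat \<lceil>real k / 2\<rceil> \<le> k"
  using nat_ceiling_half_plus_nat_floor_half[of k] by linarith

lemma pmf_binomial_half:
  assumes "c \<le> n"
  shows "pmf (binomial_pmf n (1/2)) c = real (n choose c) / 2 ^ n"
proof -
  have "(1/2 :: real) ^ c * (1/2) ^ (n - c) = (1/2) ^ n"
    using assms by (simp flip: power_add)
  then show ?thesis by (simp add: power_one_over)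
qed

lemma map_assign_pmf_card_eq_binomial:
  assumes "finite J" "S \<subseteq> J"
  shows "map_pmf (\<lambda>\<omega>. card {j\<in>S. \<omega> j}) (assign_pmf J) = binomial_pmf (card S) (1/2)"
proof -
  let ?coin = "\<lambda>_::'a. bernoulli_pmf (1/2)"
  have "finite S" using assms finite_subset by blast
  then have "binomial_pmf (card S) (1/2) =
      map_pmf (\<lambda>\<omega>. card {j\<in>S. \<omega> j}) (Pi_pmf S False ?coin)"
    by (intro binomial_pmf_altdef') auto
  also have "Pi_pmf S False ?coin =
      map_pmf (\<lambda>\<omega> j. if j \<in> S then \<omega> j else False) (Pi_pmf J False ?coin)"
    using assms by (rule Pi_pmf_subset)
  finally show ?thesis
    by (simp add: map_pmf_comp assign_pmf_def cong: conj_cong)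
qed

lemma prob_all_runs_fail:
  "measure_pmf.prob (runs_pmf J m) {\<Omega>. \<forall>i<m. \<not> P (\<Omega> i)} =
     measure_pmf.prob (assign_pmf J) {\<omega>. \<not> P \<omega>} ^ m"
proof -
  have "{\<Omega>. \<forall>i<m. \<not> P (\<Omega> i)} = Pi {..<m} (\<lambda>_. {\<omega>. \<not> P \<omega>})"
    by (auto simp: Pi_def)
  then show ?thesis
    unfolding runs_pmf_def by (simp add: measure_Pi_pmf_Pi)
qed

lemma one_minus_power_le_inverse_exp_1:
  fixes q :: real
  assumes "q \<le> 1" "1 \<le> real m * q"
  shows "(1 - q) ^ m \<le> 1 / exp 1"
proof -
  have "(1 - q) ^ m \<le> exp (- q) ^ m"
    using assms(1) exp_ge_add_one_self[of "- q"] by (intro power_mono) auto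
  also have "\<dots> = exp (- (real m * q))"
    by (simp flip: exp_of_nat_mult)
  also have "\<dots> \<le> exp (- 1)"
    using assms(2) by simp
  finally show ?thesis by (simp add: exp_minus field_simps)
qed

lemma swap_val_union:
  assumes "finite A" "finite B" "A \<inter> B = {}"
  shows "swap_val p M1 M2 (A \<union> B) = swap_val p M1 M2 A + swap_val p M1 M2 B"
proof -
  have "(\<Sum>j\<in>(A \<union> B) \<inter> M. p j) = (\<Sum>j\<in>A \<inter> M. p j) + (\<Sum>j\<in>B \<inter> M. p j)" for M
  proof -
    have "(A \<union> B) \<inter> M = A \<inter> M \<union> B \<inter> M" by blast
    then show ?thesis using assms by (simp add: sum.union_disjoint disjoint_iff)
  qed
  then show ?thesis unfolding swap_val_def by simp
qed

lemma swap_val_Un_of_subsets: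
  assumes "M1 \<inter> M2 = {}" "S' \<subseteq> M1" "S'' \<subseteq> M2"
  shows "swap_val p M1 M2 (S' \<union> S'') = (\<Sum>j\<in>S'. p j) - (\<Sum>j\<in>S''. p j)"
proof -
  have "(S' \<union> S'') \<inter> M1 = S'" "(S' \<union> S'') \<inter> M2 = S''" using assms by blast+
  then show ?thesis unfolding swap_val_def by simp
qed

lemma kswap_succeeds_if_balanced_split:
  assumes "finite S" "S \<subseteq> J" "card S = k"
    and "0 < swap_val p M1 M2 S" "swap_val p M1 M2 S < load p M1 - load p M2"
    and "card {j\<in>S. \<omega> j} = nat \<lceil>real k / 2\<rceil>"
  shows "kswap_succeeds J p M1 M2 k \<omega>"
proof -
  define S1 where "S1 = {j\<in>S. \<omega> j}"
  define S2 where "S2 = {j\<in>S. \<not> \<omega> j}"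
  have split: "S = S1 \<union> S2" "S1 \<inter> S2 = {}" "finite S1" "finite S2"
    using assms(1) unfolding S1_def S2_def by auto
  then have "card S1 + card S2 = k"
    using assms(3) card_Un_disjoint by metis
  then have "card S2 = nat \<lfloor>real k / 2\<rfloor>"
    using assms(6) nat_ceiling_half_plus_nat_floor_half[of k] unfolding S1_def by linarith
  moreover have "swap_val p M1 M2 S1 + swap_val p M1 M2 S2 = swap_val p M1 M2 S"
    using split by (simp add: swap_val_union)
  moreover have "S1 \<subseteq> {j\<in>J. \<omega> j}" "S2 \<subseteq> {j\<in>J. \<not> \<omega> j}"
    using assms(2) unfolding S1_def S2_def by auto
  ultimately show ?thesis
    unfolding kswap_succeeds_def using assms(4-6) unfolding S1_def[symmetric]
    by (intro exI[of _ S1] exI[of _ S2]) auto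
qed

lemma prob_run_fails_le:
  assumes "finite J" "S \<subseteq> J" "card S = k"
    and "0 < swap_val p M1 M2 S" "swap_val p M1 M2 S < load p M1 - load p M2"
  shows "measure_pmf.prob (assign_pmf J) {\<omega>. \<not> kswap_succeeds J p M1 M2 k \<omega>}
           \<le> 1 - real (k choose nat \<lceil>real k / 2\<rceil>) / 2 ^ k"
proof -
  let ?c = "nat \<lceil>real k / 2\<rceil>"
  let ?count = "\<lambda>\<omega>. card {j\<in>S. \<omega> j}"
  let ?balanced = "{\<omega>. ?count \<omega> = ?c}"
  have "finite S" using assms(1,2) finite_subset by blast
  then have "{\<omega>. \<not> kswap_succeeds J p M1 M2 k \<omega>} \<subseteq> - ?balanced"
    using kswap_succeeds_if_balanced_split assms(2-5) by blast
  then have "measure_pmf.prob (assign_pmf J) {\<omega>. \<not> kswap_succeeds J p M1 M2 k \<omega>}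
      \<le> measure_pmf.prob (assign_pmf J) (- ?balanced)"
    by (intro measure_pmf.finite_measure_mono) auto
  also have "\<dots> = 1 - measure_pmf.prob (assign_pmf J) ?balanced"
    using measure_pmf.prob_compl[of ?balanced] by (simp add: Compl_eq_Diff_UNIV)
  also have "measure_pmf.prob (assign_pmf J) ?balanced =
      measure_pmf.prob (map_pmf ?count (assign_pmf J)) {?c}"
    by (simp add: vimage_def)
  also have "\<dots> = pmf (binomial_pmf k (1/2)) ?c"
    using assms(3) by (simp add: map_assign_pmf_card_eq_binomial[OF assms(1,2)] measure_pmf_single)
  also have "\<dots> = real (k choose ?c) / 2 ^ k"
    using nat_ceiling_half_le by (rule pmf_binomial_half)
  finally show ?thesis .
qed

theorem lemma1:
  fixes J :: "'j set" and p :: "'j \<Rightarrow> real" and M1 M2 S' S'' :: "'j set" and k :: nat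
  assumes "finite J"
    and "\<And>j. j \<in> J \<Longrightarrow> p j > 0"
    and "is_schedule J M1 M2"
    and "load p M1 \<ge> load p M2"
    and "k \<ge> 1"
    and "S' \<subseteq> M1" and "S'' \<subseteq> M2"
    and "card S' + card S'' = k"
    and "0 < (\<Sum>j\<in>S'. p j) - (\<Sum>j\<in>S''. p j)"
    and "(\<Sum>j\<in>S'. p j) - (\<Sum>j\<in>S''. p j) < load p M1 - load p M2"
  shows "fail_prob J p M1 M2 k (nat \<lceil>gamma k\<rceil>) \<le> 1 / exp 1"
proof -
  define S where "S = S' \<union> S''"
  define q where "q = real (k choose nat \<lceil>real k / 2\<rceil>) / 2 ^ k"
  define m where "m = nat \<lceil>gamma k\<rceil>"
  let ?fail = "{\<omega>. \<not> kswap_succeeds J p M1 M2 k \<omega>}"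
  have "M1 \<inter> M2 = {}" "S \<subseteq> J"
    using assms(3,6,7) unfolding S_def is_schedule_def by blast+
  moreover have "card S = k"
    using assms(8) \<open>M1 \<inter> M2 = {}\<close> \<open>S \<subseteq> J\<close> assms(1,6,7) unfolding S_def
    by (metis card_Un_disjoint disjoint_iff finite_Un finite_subset subsetD)
  ultimately have fail_once: "measure_pmf.prob (assign_pmf J) ?fail \<le> 1 - q"
    using prob_run_fails_le[OF assms(1)] swap_val_Un_of_subsets assms(6,7,9,10)
    unfolding S_def q_def by metis
  have "q > 0" "q * gamma k = 1"
    using nat_ceiling_half_le[of k] unfolding q_def gamma_def by (simp_all add: not_less)
  then have mq_ge_1: "1 \<le> real m * q"
    unfolding m_def by (metis mult.commute mult_left_mono less_imp_le real_nat_ceiling_ge)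
  have q_le_1: "q \<le> 1"
    using fail_once measure_nonneg[of "measure_pmf (assign_pmf J)" ?fail] by linarith
  have "fail_prob J p M1 M2 k m = measure_pmf.prob (assign_pmf J) ?fail ^ m"
    unfolding fail_prob_def by (rule prob_all_runs_fail)
  also have "\<dots> \<le> (1 - q) ^ m"
    using fail_once by (intro power_mono) auto
  also have "\<dots> \<le> 1 / exp 1"
    using q_le_1 mq_ge_1 by (rule one_minus_power_le_inverse_exp_1)
  finally show ?thesis unfolding m_def .
qed

end
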